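(* Let $V$ be a finite set of nails and let $T$ be a commutator tree over $V$ whose leaves are words $t_1, \dots, t_m \in F(V)$ with $t_i$ solving a specification $g_i$ on $V$, and let $f = g_1 \vee \cdots \vee g_m$. Then (the value of) $T$ solves $f$ if and only if there is no internal node $u$ of $T$ and no $S \subseteq V$ with $f(S) = \mathsf{hang}$ such that the value of $u$ satisfies $(\mathrm{val}(u))|_S = 0$. In particular, $T$ solves $f$ if, for every $S$ with $f(S) = \mathsf{hang}$ and every internal node $u$, the specifications $\phi_1, \phi_2$ solved by the values of the two children of $u$ separate above $S$, i.e.\ there is $S'$ with $S \subseteq S' \subseteq V$ and $\phi_1(S') \neq \phi_2(S')$.
   Context: Words are elements of the free group $F(V)$ on a finite set $V$ of nails, written additively ($+$ group operation, $-$ inverse, $0$ identity). The commutator is $[a,b] = a + b - a - b$. A commutator tree is a finite rooted binary tree whose leaves are labelled by words; the value of a leaf is its label, the value of an internal node with left child $u_1$ and right child $u_2$ is $[\mathrm{val}(u_1), \mathrm{val}(u_2)]$, and the value of the tree is the value of its root. For $S \subseteq V$, $h|_S$ is the image of $h$ under the homomorphism killing the generators in $S$. A specification on $V$ is a monotone function $f: 2^V \to \{\mathsf{hang}, \mathsf{fall}\}$ with $f(V) = \mathsf{fall}$, where $\mathsf{hang} < \mathsf{fall}$ and monotone means $S \subseteq S' \Rightarrow f(S) \le f(S')$. A word $h$ solves $f$ if for every $S \subseteq V$: $h|_S = 0 \iff f(S) = \mathsf{fall}$. $\vee$ is the pointwise $\max$ with respect to $\mathsf{hang} < \mathsf{fall}$.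 Every word in $F(V)$ solves the specification $S \mapsto (\mathsf{fall}$ if $h|_S=0$, else $\mathsf{hang})$. *)

theory Defs
  imports Main
begin

type_synonym 'a word = "('a \<times> bool) list"

text \<open>A letter (v,False) is the generator v, (v,True) is its inverse -v.
  A word denotes an element of F(V); two words denote the same element iff
  their free reductions agree.\<close>

fun cons_red :: "('a \<times> bool) \<Rightarrow> 'a word \<Rightarrow> 'a word" where
  "cons_red x [] = [x]"
| "cons_red x (y # ys) =
     (if fst x = fst y \<and> snd x \<noteq> snd y then ys else x # y # ys)"

definition reduce :: "'a word \<Rightarrow> 'a word" where
  "reduce w = foldr cons_red w []"

definition is_zero :: "'a word \<Rightarrow> bool" where
  "is_zero w \<longleftrightarrow> reduce w = []"

definition winv :: "'a word \<Rightarrow> 'a word" where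
  "winv w = rev (map (\<lambda>(v, e). (v, \<not> e)) w)"

definition comm :: "'a word \<Rightarrow> 'a word \<Rightarrow> 'a word" where
  "comm a b = a @ b @ winv a @ winv b"

text \<open>h|_S: image under the homomorphism killing the generators in S.\<close>
definition kill :: "'a set \<Rightarrow> 'a word \<Rightarrow> 'a word" where
  "kill S w = filter (\<lambda>(v, e). v \<notin> S) w"

definition word_over :: "'a set \<Rightarrow> 'a word \<Rightarrow> bool" where
  "word_over V w \<longleftrightarrow> fst ` set w \<subseteq> V"

datatype 'w ctree = Leaf 'w | Node "'w ctree" "'w ctree"

fun cval :: "'a word ctree \<Rightarrow> 'a word" where
  "cval (Leaf w) = w"
| "cval (Node l r) = comm (cval l) (cval r)"

fun leaves :: "'w ctree \<Rightarrow> 'w list" where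
  "leaves (Leaf w) = [w]"
| "leaves (Node l r) = leaves l @ leaves r"

text \<open>Internal nodes, represented by the subtrees rooted at them.\<close>
fun internal_nodes :: "'w ctree \<Rightarrow> 'w ctree set" where
  "internal_nodes (Leaf w) = {}"
| "internal_nodes (Node l r) = insert (Node l r) (internal_nodes l \<union> internal_nodes r)"

datatype outcome = Hang | Fall

definition out_le :: "outcome \<Rightarrow> outcome \<Rightarrow> bool" where
  "out_le x y \<longleftrightarrow> x = Hang \<or> y = Fall"

definition out_join :: "outcome \<Rightarrow> outcome \<Rightarrow> outcome" where
  "out_join x y = (if x = Fall \<or> y = Fall then Fall else Hang)"

text \<open>A specification on V: a function on subsets of V (values outside 2^V irrelevant).\<close>
definition is_spec :: "'a set \<Rightarrow> ('a set \<Rightarrow> outcome) \<Rightarrow> bool" where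
  "is_spec V f \<longleftrightarrow>
     (\<forall>S S'. S \<subseteq> S' \<and> S' \<subseteq> V \<longrightarrow> out_le (f S) (f S')) \<and> f V = Fall"

definition solves :: "'a set \<Rightarrow> 'a word \<Rightarrow> ('a set \<Rightarrow> outcome) \<Rightarrow> bool" where
  "solves V h f \<longleftrightarrow> (\<forall>S. S \<subseteq> V \<longrightarrow> (is_zero (kill S h) \<longleftrightarrow> f S = Fall))"

definition spec_join :: "nat \<Rightarrow> (nat \<Rightarrow> 'a set \<Rightarrow> outcome) \<Rightarrow> 'a set \<Rightarrow> outcome" where
  "spec_join m g = (\<lambda>S. foldr out_join (map (\<lambda>i. g i S) [0..<m]) Hang)"

end

theory Submission
  imports Defs
begin

(* Killing nails commutes with taking commutators, and a commutator with a vanishing entry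
  vanishes; hence val(T)|_S = 0 iff some leaf or some internal node vanishes under S. If an
  internal node vanishes under S but no leaf does, take a lowest such node [a,b]: a|_S and b|_S
  are nonzero and commute in a free group, so by the centraliser theorem they are nonzero
  powers of one element z. Free groups are torsion-free, hence for every S' containing S,
  a|_S' = 0 iff z|_S' = 0 iff b|_S' = 0, and the specifications solved by the two children
  agree above S. *)

section \<open>Reduced words\<close>

definition inv_letter :: "'a \<times> bool \<Rightarrow> 'a \<times> bool" where
  "inv_letter x = (fst x, \<not> snd x)"

lemma inv_letter_inv_letter [simp]: "inv_letter (inv_letter x) = x"
  by (simp add: inv_letter_def)

lemma inv_letter_neq [simp]: "inv_letter x \<noteq> x" "x \<noteq> inv_letter x"
  by (auto simp: inv_letter_def prod_eq_iff)

lemma inv_letter_eq_iff [simp]: "inv_letter x = inv_letter y \<longleftrightarrow> x = y"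
  by (auto simp: inv_letter_def prod_eq_iff)

lemma fst_inv_letter [simp]: "fst (inv_letter x) = fst x"
  by (simp add: inv_letter_def)

lemma eq_inv_letter_commute: "x = inv_letter y \<longleftrightarrow> y = inv_letter x"
  by auto

lemma cons_red_Cons [simp]:
  "cons_red x (y # ys) = (if y = inv_letter x then ys else x # y # ys)"
  by (cases x; cases y) (auto simp: inv_letter_def)

declare cons_red.simps(2) [simp del]

fun reduced :: "'a word \<Rightarrow> bool" where
  "reduced (x # y # ys) \<longleftrightarrow> y \<noteq> inv_letter x \<and> reduced (y # ys)"
| "reduced _ \<longleftrightarrow> True"

lemma reduced_Cons: "reduced (x # w) \<longleftrightarrow> reduced w \<and> (w \<noteq> [] \<longrightarrow> hd w \<noteq> inv_letter x)"
  by (cases w) auto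

lemma reduced_append:
  "reduced (xs @ ys) \<longleftrightarrow>
     reduced xs \<and> reduced ys \<and> (xs \<noteq> [] \<longrightarrow> ys \<noteq> [] \<longrightarrow> hd ys \<noteq> inv_letter (last xs))"
proof (induction xs)
  case (Cons x xs)
  then show ?case by (cases xs) (auto simp: reduced_Cons)
qed simp

lemma reduce_Nil [simp]: "reduce [] = []"
  by (simp add: reduce_def)

lemma reduce_Cons: "reduce (x # w) = cons_red x (reduce w)"
  by (simp add: reduce_def)

lemma reduce_append: "reduce (xs @ ys) = foldr cons_red xs (reduce ys)"
  by (simp add: reduce_def)

lemma reduced_cons_red: "reduced w \<Longrightarrow> reduced (cons_red x w)"
  by (cases w) (auto simp: reduced_Cons)

lemma reduced_foldr_cons_red: "reduced w \<Longrightarrow> reduced (foldr cons_red xs w)"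
  by (induction xs) (auto intro: reduced_cons_red)

lemma reduced_reduce: "reduced (reduce w)"
  unfolding reduce_def by (rule reduced_foldr_cons_red) simp

lemma reduce_reduced: "reduced w \<Longrightarrow> reduce w = w"
proof (induction w)
  case (Cons x w)
  then show ?case by (cases w) (auto simp: reduce_Cons reduced_Cons)
qed simp

lemma cons_red_inv_letter_cancel: "reduced w \<Longrightarrow> cons_red (inv_letter x) (cons_red x w) = w"
  by (cases w rule: reduced.cases) auto

lemma cons_red_cancel_inv_letter: "reduced w \<Longrightarrow> cons_red x (cons_red (inv_letter x) w) = w"
  using cons_red_inv_letter_cancel [of w "inv_letter x"] by simp

lemma foldr_cons_red_cons_red:
  assumes "reduced w" "reduced z"
  shows "foldr cons_red (cons_red x w) z = cons_red x (foldr cons_red w z)"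
proof (cases w)
  case (Cons y w')
  have "reduced (foldr cons_red w' z)"
    using \<open>reduced z\<close> by (rule reduced_foldr_cons_red)
  then show ?thesis
    using Cons by (simp add: cons_red_cancel_inv_letter)
qed simp

lemma foldr_cons_red_reduce: "reduced z \<Longrightarrow> foldr cons_red (reduce w) z = foldr cons_red w z"
  by (induction w) (auto simp: reduce_Cons foldr_cons_red_cons_red reduced_reduce)

lemma reduce_append_reduce_left: "reduce (reduce x @ y) = reduce (x @ y)"
  by (simp add: reduce_append foldr_cons_red_reduce reduced_reduce)

lemma reduce_append_reduce_right: "reduce (x @ reduce y) = reduce (x @ y)"
  by (simp add: reduce_append reduce_reduced reduced_reduce)

lemma winv_eq: "winv w = rev (map inv_letter w)"
  by (simp add: winv_def inv_letter_def case_prod_beta')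

lemma winv_Nil [simp]: "winv [] = []"
  and winv_Cons: "winv (x # w) = winv w @ [inv_letter x]"
  and winv_snoc: "winv (w @ [x]) = inv_letter x # winv w"
  and winv_winv [simp]: "winv (winv w) = w"
  and winv_eq_Nil_iff [simp]: "winv w = [] \<longleftrightarrow> w = []"
  by (simp_all add: winv_eq rev_map comp_def)

lemma hd_winv: "w \<noteq> [] \<Longrightarrow> hd (winv w) = inv_letter (last w)"
  by (simp add: winv_eq hd_rev last_map)

lemma last_winv: "w \<noteq> [] \<Longrightarrow> last (winv w) = inv_letter (hd w)"
  by (simp add: winv_eq last_rev hd_map)

lemma reduced_winv: "reduced w \<Longrightarrow> reduced (winv w)"
proof (induction w)
  case (Cons x w)
  then show ?case by (auto simp: winv_Cons reduced_append reduced_Cons last_winv)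
qed simp

lemma reduce_winv_append_cancel: "reduce (winv w @ w) = []"
proof (induction w)
  case (Cons x w)
  have "reduce (winv (x # w) @ x # w) =
      foldr cons_red (winv w) (cons_red (inv_letter x) (cons_red x (reduce w)))"
    by (simp add: winv_Cons reduce_append reduce_Cons)
  also have "\<dots> = reduce (winv w @ w)"
    by (simp add: cons_red_inv_letter_cancel reduced_reduce reduce_append)
  finally show ?case
    using Cons by simp
qed simp

section \<open>Integer multiples and cyclic pairs in groups\<close>

fun npow :: "'b::monoid_add \<Rightarrow> nat \<Rightarrow> 'b" where
  "npow a 0 = 0"
| "npow a (Suc n) = a + npow a n"

lemma npow_zero [simp]: "npow 0 n = 0"
  by (induction n) simp_all

definition zpow :: "'b::group_add \<Rightarrow> int \<Rightarrow> 'b" where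
  "zpow a k = (if 0 \<le> k then npow a (nat k) else - npow a (nat (- k)))"

lemma zpow_of_nat [simp]: "zpow a (int n) = npow a n"
  by (simp add: zpow_def)

lemma zpow_zero [simp]: "zpow a 0 = 0"
  by (simp add: zpow_def)

lemma zpow_one: "zpow a 1 = a"
  by (simp add: zpow_def)

lemma zpow_uminus: "zpow a (- k) = - zpow a k"
  by (simp add: zpow_def)

lemma npow_conj: "npow (x + a - x) n = x + npow a n - (x::'b::group_add)"
  by (induction n) (simp_all add: diff_conv_add_uminus add.assoc del: add_uminus_conv_diff)

lemma zpow_conj: "zpow (x + a - x) k = x + zpow a k - (x::'b::group_add)"
  unfolding zpow_def npow_conj
  by (simp add: diff_conv_add_uminus add.assoc minus_add del: add_uminus_conv_diff)

lemma commute_conj: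
  fixes a b x :: "'b::group_add"
  assumes "a + b = b + a"
  shows "(x + a - x) + (x + b - x) = (x + b - x) + (x + a - x)"
proof -
  have "(x + a - x) + (x + b - x) = x + (a + b) - x"
    by (simp add: diff_conv_add_uminus add.assoc del: add_uminus_conv_diff)
  also have "\<dots> = (x + b - x) + (x + a - x)"
    by (simp add: assms diff_conv_add_uminus add.assoc del: add_uminus_conv_diff)
  finally show ?thesis .
qed

lemma commute_uminus_left:
  fixes a b :: "'b::group_add"
  assumes "a + b = b + a"
  shows "- a + b = b + - a"
proof -
  have "- a + b = - a + (b + a) - a"
    by (simp add: diff_conv_add_uminus add.assoc del: add_uminus_conv_diff)
  also have "\<dots> = b + - a"
    by (simp add: assms [symmetric] diff_conv_add_uminus add.assoc del: add_uminus_conv_diff)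
  finally show ?thesis .
qed

lemma commute_if_commutator_eq_zero:
  fixes a b :: "'b::group_add"
  assumes "a + b - a - b = 0"
  shows "a + b = b + a"
  using assms by (metis diff_eq_eq eq_iff_diff_eq_0)

definition cyclic_pair :: "'b::group_add \<Rightarrow> 'b \<Rightarrow> bool" where
  "cyclic_pair a b \<longleftrightarrow> (\<exists>z p q. a = zpow z p \<and> b = zpow z q)"

lemma cyclic_pair_zero_left: "cyclic_pair 0 b"
  unfolding cyclic_pair_def by (metis zpow_one zpow_zero)

lemma cyclic_pair_zero_right: "cyclic_pair a 0"
  unfolding cyclic_pair_def by (metis zpow_one zpow_zero)

lemma cyclic_pair_uminus_left: "cyclic_pair (- a) b \<Longrightarrow> cyclic_pair a b"
  unfolding cyclic_pair_def by (metis minus_minus zpow_uminus)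

lemma cyclic_pair_conj_imp: "cyclic_pair a b \<Longrightarrow> cyclic_pair (x + a - x) (x + b - x)"
  unfolding cyclic_pair_def by (metis zpow_conj)

lemma cyclic_pair_conj_iff: "cyclic_pair (x + a - x) (x + b - x) \<longleftrightarrow> cyclic_pair a b"
proof
  assume "cyclic_pair (x + a - x) (x + b - x)"
  from cyclic_pair_conj_imp [OF this, of "- x"] show "cyclic_pair a b"
    by (simp add: diff_conv_add_uminus add.assoc del: add_uminus_conv_diff)
qed (rule cyclic_pair_conj_imp)

section \<open>The free group and its centralisers\<close>

typedef 'a free_group = "{w :: 'a word. reduced w}"
  morphisms reduced_word Abs_free_group
  by (rule exI [of _ "[]"]) simp

definition fg_of :: "'a word \<Rightarrow> 'a free_group" where
  "fg_of w = Abs_free_group (reduce w)"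

lemma reduced_reduced_word: "reduced (reduced_word a)"
  using reduced_word by simp

lemma reduced_word_fg_of: "reduced_word (fg_of w) = reduce w"
  by (simp add: fg_of_def Abs_free_group_inverse reduced_reduce)

lemma fg_of_reduced_word [simp]: "fg_of (reduced_word a) = a"
  by (simp add: fg_of_def reduce_reduced reduced_reduced_word reduced_word_inverse)

lemma fg_of_eq_iff: "fg_of v = fg_of w \<longleftrightarrow> reduce v = reduce w"
  by (simp add: fg_of_def Abs_free_group_inject reduced_reduce)

instantiation free_group :: (type) group_add
begin

definition zero_free_group_def: "0 = fg_of []"
definition plus_free_group_def: "a + b = fg_of (reduced_word a @ reduced_word b)"
definition uminus_free_group_def: "- a = fg_of (winv (reduced_word a))"
definition minus_free_group_def: "a - b = a + - (b :: 'a free_group)"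

instance
proof
  fix a b c :: "'a free_group"
  show "a + b + c = a + (b + c)"
    by (simp add: plus_free_group_def reduced_word_fg_of fg_of_eq_iff
        reduce_append_reduce_left reduce_append_reduce_right)
  show "0 + a = a" "a + 0 = a"
    by (simp_all add: plus_free_group_def zero_free_group_def reduced_word_fg_of)
  show "- a + a = 0"
    by (simp add: plus_free_group_def zero_free_group_def uminus_free_group_def
        reduced_word_fg_of fg_of_eq_iff reduce_append_reduce_left reduce_winv_append_cancel)
  show "a + - b = a - b"
    by (simp add: minus_free_group_def)
qed

end

lemma fg_of_Nil: "fg_of [] = 0"
  by (simp add: zero_free_group_def)

lemma fg_of_append: "fg_of (v @ w) = fg_of v + fg_of w"
  by (simp add: plus_free_group_def reduced_word_fg_of fg_of_eq_iff
      reduce_append_reduce_left reduce_append_reduce_right)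

lemma fg_of_Cons: "fg_of (x # w) = fg_of [x] + fg_of w"
  using fg_of_append [of "[x]" w] by simp

lemma fg_of_winv: "fg_of (winv w) = - fg_of w"
proof (rule minus_unique [symmetric])
  show "fg_of w + fg_of (winv w) = 0"
    using reduce_winv_append_cancel [of "winv w"]
    by (simp add: fg_of_append [symmetric] fg_of_Nil [symmetric] fg_of_eq_iff)
qed

lemma fg_of_inv_letter: "fg_of [inv_letter x] = - fg_of [x]"
  using fg_of_winv [of "[x]"] by (simp add: winv_eq)

lemma fg_of_conj_letter: "fg_of (x # w @ [inv_letter x]) = fg_of [x] + fg_of w - fg_of [x]"
  using fg_of_append [of "[x]" "w @ [inv_letter x]"]
  by (simp add: fg_of_append fg_of_inv_letter diff_conv_add_uminus add.assoc
      del: add_uminus_conv_diff)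

lemma fg_of_eq_zero_iff: "fg_of w = 0 \<longleftrightarrow> is_zero w"
  by (simp add: is_zero_def fg_of_Nil [symmetric] fg_of_eq_iff)

lemma fg_of_comm: "fg_of (comm v w) = fg_of v + fg_of w - fg_of v - fg_of w"
  by (simp add: comm_def fg_of_append fg_of_winv diff_conv_add_uminus add.assoc
      del: add_uminus_conv_diff)

lemma fg_of_concat_replicate: "fg_of (concat (replicate n w)) = npow (fg_of w) n"
  by (induction n) (simp_all add: fg_of_append fg_of_Nil)

definition cyclically_reduced :: "'a word \<Rightarrow> bool" where
  "cyclically_reduced w \<longleftrightarrow> reduced w \<and> (w \<noteq> [] \<longrightarrow> hd w \<noteq> inv_letter (last w))"

lemma cyclically_reduced_winv: "cyclically_reduced w \<Longrightarrow> cyclically_reduced (winv w)"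
  unfolding cyclically_reduced_def
  by (metis reduced_winv hd_winv last_winv inv_letter_inv_letter winv_eq_Nil_iff)

lemma cyclically_reduced_rotate1: "cyclically_reduced w \<Longrightarrow> cyclically_reduced (rotate1 w)"
  by (cases w) (auto simp: cyclically_reduced_def reduced_append reduced_Cons hd_append
      eq_inv_letter_commute)

lemma cyclically_reduced_rotate_last:
  assumes "cyclically_reduced (w @ [x])"
  shows "cyclically_reduced (x # w)"
proof -
  have "x # w = winv (rotate1 (winv (w @ [x])))"
    by (simp add: winv_snoc winv_Cons)
  then show ?thesis
    using assms by (simp add: cyclically_reduced_winv cyclically_reduced_rotate1)
qed

lemma reduced_concat_replicate: "cyclically_reduced w \<Longrightarrow> reduced (concat (replicate n w))"
proof (induction n)
  case (Suc n)
  then show ?case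
    by (cases n) (auto simp: cyclically_reduced_def reduced_append)
qed simp

lemma reduced_obtain_ends:
  assumes "reduced w" "w \<noteq> []" "hd w \<noteq> last w"
  obtains w' where "w = hd w # w' @ [last w]" "reduced w'"
proof -
  obtain x w1 where w: "w = x # w1"
    using assms(2) by (cases w) auto
  with assms(3) have "w1 \<noteq> []"
    by auto
  with w have "w = hd w # butlast w1 @ [last w]"
    by simp
  moreover have "reduced (butlast w1)"
    using assms(1) calculation by (metis reduced_append reduced_Cons)
  ultimately show thesis
    using that by blast
qed

lemma reduced_not_cyclically_reduced_obtain:
  assumes "reduced w" "\<not> cyclically_reduced w"
  obtains x w' where "w = x # w' @ [inv_letter x]" "reduced w'"
proof -
  have "w \<noteq> []" "hd w = inv_letter (last w)"
    using assms by (auto simp: cyclically_reduced_def)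
  with assms(1) show thesis
    by (metis reduced_obtain_ends inv_letter_neq(2) inv_letter_inv_letter that)
qed

lemma ex_conj_cyclically_reduced: "\<exists>x c. cyclically_reduced c \<and> a = x + fg_of c - x"
proof -
  have "\<exists>x c. cyclically_reduced c \<and> fg_of w = x + fg_of c - x" if "reduced w" for w
    using that
  proof (induction w rule: length_induct)
    case (1 w)
    show ?case
    proof (cases "cyclically_reduced w")
      case True
      then show ?thesis
        by (intro exI [of _ 0] exI [of _ w]) simp
    next
      case False
      with "1.prems" obtain y w' where w: "w = y # w' @ [inv_letter y]" and "reduced w'"
        by (rule reduced_not_cyclically_reduced_obtain)
      moreover have "length w' < length w"
        using w by simp
      ultimately obtain x c where "cyclically_reduced c" "fg_of w' = x + fg_of c - x"
        using "1.IH" by blast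
      have "fg_of w = fg_of [y] + fg_of w' - fg_of [y]"
        by (simp only: w fg_of_conj_letter)
      also have "\<dots> = (fg_of [y] + x) + fg_of c - (fg_of [y] + x)"
        using \<open>fg_of w' = x + fg_of c - x\<close>
        by (simp add: diff_conv_add_uminus add.assoc minus_add del: add_uminus_conv_diff)
      finally show ?thesis
        using \<open>cyclically_reduced c\<close> by blast
    qed
  qed
  from this [OF reduced_reduced_word [of a]] show ?thesis
    by simp
qed

lemma npow_eq_zero_free_group:
  assumes "npow (a :: 'a free_group) n = 0" "0 < n"
  shows "a = 0"
proof -
  obtain x c where c: "cyclically_reduced c" and a: "a = x + fg_of c - x"
    using ex_conj_cyclically_reduced by blast
  have "x + npow (fg_of c) n = x + 0"
    using assms(1) by (simp add: a npow_conj)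
  then have "fg_of (concat (replicate n c)) = 0"
    by (simp only: add_left_cancel fg_of_concat_replicate)
  then have "concat (replicate n c) = []"
    using c by (simp add: fg_of_eq_zero_iff is_zero_def reduce_reduced reduced_concat_replicate)
  then have "c = []"
    using assms(2) by (cases n) auto
  then show ?thesis
    by (simp add: a fg_of_Nil)
qed

lemma zpow_eq_zero_iff_free_group: "k \<noteq> 0 \<Longrightarrow> zpow (a :: 'a free_group) k = 0 \<longleftrightarrow> a = 0"
  using npow_eq_zero_free_group [of a "nat k"] npow_eq_zero_free_group [of a "nat (- k)"]
  by (auto simp: zpow_def)

lemma cyclic_pair_if_commuting_words:
  assumes "reduced (c @ b)" "reduced (b @ c)" "fg_of c + fg_of b = fg_of b + fg_of c"
  shows "cyclic_pair (fg_of c) (fg_of b)"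
proof -
  have "c @ b = b @ c"
    using assms by (metis fg_of_append fg_of_eq_iff reduce_reduced)
  then obtain m n r where "c = concat (replicate m r)" "b = concat (replicate n r)"
    by (metis comm_append_are_replicate)
  then show ?thesis
    unfolding cyclic_pair_def by (metis fg_of_concat_replicate zpow_of_nat)
qed

lemma not_reduced_append_obtain:
  assumes c: "cyclically_reduced c" "c \<noteq> []" and b: "reduced b" "b \<noteq> []"
    and "\<not> (reduced (c @ b) \<and> reduced (b @ c))"
    and "\<not> (reduced (winv c @ b) \<and> reduced (b @ winv c))"
  obtains b' where "reduced b'"
    "b = inv_letter (last c) # b' @ [last c] \<or> b = hd c # b' @ [inv_letter (hd c)]"
proof -
  have "reduced c" "hd c \<noteq> inv_letter (last c)"
    using c by (simp_all add: cyclically_reduced_def)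
  then have "reduced (c @ b) \<longleftrightarrow> hd b \<noteq> inv_letter (last c)"
    and "reduced (b @ c) \<longleftrightarrow> hd c \<noteq> inv_letter (last b)"
    and "reduced (winv c @ b) \<longleftrightarrow> hd b \<noteq> hd c"
    and "reduced (b @ winv c) \<longleftrightarrow> last b \<noteq> last c"
    using b c(2) by (auto simp: reduced_append reduced_winv hd_winv last_winv)
  with assms(5,6) \<open>hd c \<noteq> inv_letter (last c)\<close>
  have ends: "hd b = inv_letter (last c) \<and> last b = last c \<or>
      hd b = hd c \<and> last b = inv_letter (hd c)"
    by (metis inv_letter_inv_letter)
  then have "hd b \<noteq> last b"
    by auto
  with b obtain b' where "b = hd b # b' @ [last b]" "reduced b'"
    by (rule reduced_obtain_ends)
  with ends show thesis
    using that by auto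
qed

lemma cyclic_pair_conj_step:
  assumes c: "cyclically_reduced c" "c \<noteq> []"
    and b: "b = inv_letter (last c) # b' @ [last c]"
    and commute: "fg_of c + fg_of b = fg_of b + fg_of c"
    and IH: "\<And>c. cyclically_reduced c \<Longrightarrow> fg_of c + fg_of b' = fg_of b' + fg_of c \<Longrightarrow>
      cyclic_pair (fg_of c) (fg_of b')"
  shows "cyclic_pair (fg_of c) (fg_of b)"
proof -
  define x where "x = fg_of [last c]"
  define c' where "c' = last c # butlast c"
  have "cyclically_reduced c'"
    using c by (simp add: c'_def cyclically_reduced_rotate_last)
  have "fg_of c = fg_of (butlast c) + x"
    using c(2) by (simp add: x_def fg_of_append [symmetric])
  then have c': "fg_of c' = x + fg_of c - x"
    by (simp add: c'_def x_def fg_of_Cons [of "last c" "butlast c"] diff_conv_add_uminus add.assoc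
        del: add_uminus_conv_diff)
  have "fg_of b = - x + fg_of b' - - x"
    using fg_of_conj_letter [of "inv_letter (last c)" b'] by (simp add: b x_def fg_of_inv_letter)
  then have b': "fg_of b' = x + fg_of b - x"
    by (simp add: diff_conv_add_uminus add.assoc del: add_uminus_conv_diff)
  have "fg_of c' + fg_of b' = fg_of b' + fg_of c'"
    unfolding c' b' by (rule commute_conj [OF commute])
  with \<open>cyclically_reduced c'\<close> have "cyclic_pair (fg_of c') (fg_of b')"
    by (rule IH)
  then show ?thesis
    by (simp add: c' b' cyclic_pair_conj_iff)
qed

(* Unless c b and b c, or c^-1 b and b c^-1, are reduced as
  written (and then equal, hence powers of a common word), b begins and ends with mutually
  inverse letters matching an end of c; conjugating by that letter shortens b and rotates c. *)
lemma cyclic_pair_if_commute_cyclically_reduced: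
  assumes "cyclically_reduced c" "reduced b" "fg_of c + fg_of b = fg_of b + fg_of c"
  shows "cyclic_pair (fg_of c) (fg_of b)"
  using assms
proof (induction "length b" arbitrary: b c rule: less_induct)
  case less
  note c = less.prems(1) and b = less.prems(2) and commute = less.prems(3)
  have commute_winv: "fg_of (winv c) + fg_of b = fg_of b + fg_of (winv c)"
    using commute by (simp add: fg_of_winv commute_uminus_left)
  consider "c = []" | "b = []"
    | "reduced (c @ b) \<and> reduced (b @ c)"
    | "reduced (winv c @ b) \<and> reduced (b @ winv c)"
    | b' where "c \<noteq> []" "reduced b'"
        "b = inv_letter (last c) # b' @ [last c] \<or> b = hd c # b' @ [inv_letter (hd c)]"
    using c b not_reduced_append_obtain by blast
  then show ?case
  proof cases
    case 1
    then show ?thesis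
      by (simp add: fg_of_Nil cyclic_pair_zero_left)
  next
    case 2
    then show ?thesis
      by (simp add: fg_of_Nil cyclic_pair_zero_right)
  next
    case 3
    with commute show ?thesis
      by (simp add: cyclic_pair_if_commuting_words)
  next
    case 4
    with commute_winv have "cyclic_pair (fg_of (winv c)) (fg_of b)"
      using cyclic_pair_if_commuting_words by blast
    then show ?thesis
      by (simp add: fg_of_winv cyclic_pair_uminus_left)
  next
    case (5 b')
    then have IH: "cyclic_pair (fg_of c') (fg_of b')"
      if "cyclically_reduced c'" "fg_of c' + fg_of b' = fg_of b' + fg_of c'" for c'
      using less.hyps that by auto
    from 5 consider "b = inv_letter (last c) # b' @ [last c]"
      | "b = inv_letter (last (winv c)) # b' @ [last (winv c)]"
      by (auto simp: last_winv)
    then show ?thesis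
    proof cases
      case 1
      with c \<open>c \<noteq> []\<close> show ?thesis
        using commute IH by (rule cyclic_pair_conj_step)
    next
      case 2
      have "cyclic_pair (fg_of (winv c)) (fg_of b)"
        using cyclically_reduced_winv [OF c] _ 2 commute_winv IH
        by (rule cyclic_pair_conj_step) (simp add: \<open>c \<noteq> []\<close>)
      then show ?thesis
        by (simp add: fg_of_winv cyclic_pair_uminus_left)
    qed
  qed
qed

theorem cyclic_pair_if_commute:
  fixes a b :: "'a free_group"
  assumes "a + b = b + a"
  shows "cyclic_pair a b"
proof -
  obtain x c where c: "cyclically_reduced c" and a: "a = x + fg_of c - x"
    using ex_conj_cyclically_reduced by blast
  define b' where "b' = - x + b - - x"
  have "fg_of c = - x + a - - x"
    by (simp add: a diff_conv_add_uminus add.assoc del: add_uminus_conv_diff)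
  then have "fg_of c + b' = b' + fg_of c"
    unfolding b'_def by (simp only: commute_conj [OF assms])
  then have "fg_of c + fg_of (reduced_word b') = fg_of (reduced_word b') + fg_of c"
    by simp
  with c have "cyclic_pair (fg_of c) b'"
    using cyclic_pair_if_commute_cyclically_reduced reduced_reduced_word by fastforce
  moreover have "b = x + b' - x"
    by (simp add: b'_def diff_conv_add_uminus add.assoc del: add_uminus_conv_diff)
  ultimately show ?thesis
    by (simp add: a cyclic_pair_conj_iff)
qed

section \<open>Killing nails\<close>

lemma kill_Nil [simp]: "kill S [] = []"
  by (simp add: kill_def)

lemma kill_Cons: "kill S (x # w) = (if fst x \<in> S then kill S w else x # kill S w)"
  by (cases x) (simp add: kill_def)

lemma kill_append: "kill S (v @ w) = kill S v @ kill S w"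
  by (simp add: kill_def)

lemma kill_kill: "S \<subseteq> S' \<Longrightarrow> kill S' (kill S w) = kill S' w"
  by (auto simp: kill_def intro!: filter_cong)

lemma reduce_kill_cons_red: "reduce (kill S (cons_red x w)) = reduce (kill S (x # w))"
proof (cases w)
  case (Cons y w')
  show ?thesis
  proof (cases "y = inv_letter x")
    case True
    then have "reduce (kill S (x # y # w')) = reduce (kill S w')"
      by (simp add: kill_Cons reduce_Cons cons_red_cancel_inv_letter reduced_reduce
          del: cons_red_Cons)
    with Cons True show ?thesis
      by simp
  qed (simp add: Cons)
qed (simp add: cons_red.simps)

lemma reduce_kill_reduce: "reduce (kill S (reduce w)) = reduce (kill S w)"
proof (induction w)
  case (Cons x w)
  then show ?case
    by (simp add: reduce_Cons reduce_kill_cons_red kill_Cons)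
qed simp

definition fg_kill :: "'a set \<Rightarrow> 'a free_group \<Rightarrow> 'a free_group" where
  "fg_kill S a = fg_of (kill S (reduced_word a))"

lemma fg_of_kill: "fg_of (kill S w) = fg_kill S (fg_of w)"
  by (simp add: fg_kill_def reduced_word_fg_of fg_of_eq_iff reduce_kill_reduce)

lemma fg_kill_add: "fg_kill S (a + b) = fg_kill S a + fg_kill S b"
proof -
  have "fg_kill S (a + b) = fg_of (kill S (reduced_word a @ reduced_word b))"
    by (simp only: plus_free_group_def fg_of_kill)
  also have "\<dots> = fg_kill S a + fg_kill S b"
    by (simp only: kill_append fg_of_append fg_kill_def)
  finally show ?thesis .
qed

lemma fg_kill_zero [simp]: "fg_kill S 0 = 0"
  by (simp add: zero_free_group_def fg_kill_def reduced_word_fg_of)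

lemma fg_kill_uminus: "fg_kill S (- a) = - fg_kill S a"
  by (metis add.right_inverse fg_kill_add fg_kill_zero minus_unique)

lemma fg_kill_diff: "fg_kill S (a - b) = fg_kill S a - fg_kill S b"
  by (simp add: diff_conv_add_uminus fg_kill_add fg_kill_uminus del: add_uminus_conv_diff)

lemma fg_kill_zpow: "fg_kill S (zpow a k) = zpow (fg_kill S a) k"
proof -
  have "fg_kill S (npow a n) = npow (fg_kill S a) n" for n
    by (induction n) (simp_all add: fg_kill_add)
  then show ?thesis
    by (simp add: zpow_def fg_kill_uminus)
qed

lemma fg_kill_fg_kill: "S \<subseteq> S' \<Longrightarrow> fg_kill S' (fg_kill S a) = fg_kill S' a"
  by (simp add: fg_kill_def reduced_word_fg_of fg_of_eq_iff reduce_kill_reduce kill_kill)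

lemma fg_kill_eq_zero_iff_if_commute:
  assumes "a + b = b + a" "a \<noteq> 0" "b \<noteq> 0"
  shows "fg_kill S a = 0 \<longleftrightarrow> fg_kill S b = 0"
proof -
  obtain z p q where a: "a = zpow z p" and b: "b = zpow z q"
    using cyclic_pair_if_commute [OF assms(1)] by (auto simp: cyclic_pair_def)
  with assms(2,3) have "p \<noteq> 0" "q \<noteq> 0"
    by auto
  then show ?thesis
    by (simp add: a b fg_kill_zpow zpow_eq_zero_iff_free_group)
qed

section \<open>Commutator trees\<close>

abbreviation falls :: "'a set \<Rightarrow> 'a word \<Rightarrow> bool" where
  "falls S w \<equiv> is_zero (kill S w)"

lemma falls_iff: "falls S w \<longleftrightarrow> fg_kill S (fg_of w) = 0"
  by (simp add: fg_of_eq_zero_iff [symmetric] fg_of_kill)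

lemma falls_cval_Node_if_child:
  "falls S (cval l) \<or> falls S (cval r) \<Longrightarrow> falls S (cval (Node l r))"
  by (auto simp: falls_iff fg_of_comm fg_kill_add fg_kill_diff)

lemma falls_cval_iff:
  "falls S (cval t) \<longleftrightarrow>
     (\<exists>w\<in>set (leaves t). falls S w) \<or> (\<exists>u\<in>internal_nodes t. falls S (cval u))"
proof (induction t)
  case (Node l r)
  then show ?case
    using falls_cval_Node_if_child [of S l r] by auto
qed simp

lemma minimal_falling_node:
  assumes "falls S (cval t)" "\<forall>w\<in>set (leaves t). \<not> falls S w"
  shows "\<exists>l r. Node l r \<in> internal_nodes t \<and>
    falls S (cval (Node l r)) \<and> \<not> falls S (cval l) \<and> \<not> falls S (cval r)"
  using assms
proof (induction t)
  case (Node l r)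
  then show ?case
    by (cases "falls S (cval l) \<or> falls S (cval r)") auto
qed simp

lemma children_fall_together:
  assumes "falls S (cval (Node l r))" "\<not> falls S (cval l)" "\<not> falls S (cval r)" "S \<subseteq> S'"
  shows "falls S' (cval l) \<longleftrightarrow> falls S' (cval r)"
proof -
  define a b where "a = fg_kill S (fg_of (cval l))" and "b = fg_kill S (fg_of (cval r))"
  have "a + b - a - b = 0"
    using assms(1) by (simp add: a_def b_def falls_iff fg_of_comm fg_kill_add fg_kill_diff)
  moreover have "a \<noteq> 0" "b \<noteq> 0"
    using assms(2,3) by (simp_all add: a_def b_def falls_iff)
  ultimately have "fg_kill S' a = 0 \<longleftrightarrow> fg_kill S' b = 0"
    by (intro fg_kill_eq_zero_iff_if_commute commute_if_commutator_eq_zero)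
  then show ?thesis
    using assms(4) by (simp add: a_def b_def falls_iff fg_kill_fg_kill)
qed

lemma spec_join_eq_Fall_iff: "spec_join m g S = Fall \<longleftrightarrow> (\<exists>i<m. g i S = Fall)"
proof -
  have "foldr out_join xs Hang = Fall \<longleftrightarrow> Fall \<in> set xs" for xs
    by (induction xs) (auto simp: out_join_def)
  then have "spec_join m g S = Fall \<longleftrightarrow> (\<exists>i\<in>{0..<m}. Fall = g i S)"
    by (simp add: spec_join_def image_iff)
  then show ?thesis
    by (metis atLeastLessThan_iff zero_le)
qed

lemma spec_join_eq_Fall_iff_falls:
  assumes "\<forall>i<length ws. solves V (ws ! i) (g i)" "S \<subseteq> V"
  shows "spec_join (length ws) g S = Fall \<longleftrightarrow> (\<exists>w\<in>set ws. falls S w)"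
proof -
  have "spec_join (length ws) g S = Fall \<longleftrightarrow> (\<exists>i<length ws. falls S (ws ! i))"
    using assms by (auto simp: spec_join_eq_Fall_iff solves_def)
  also have "\<dots> \<longleftrightarrow> (\<exists>w\<in>set ws. falls S w)"
    by (metis in_set_conv_nth)
  finally show ?thesis .
qed

lemma solves_cval_iff_no_falling_node:
  assumes leaves: "\<And>S. S \<subseteq> V \<Longrightarrow> f S = Fall \<longleftrightarrow> (\<exists>w\<in>set (leaves T). falls S w)"
  shows "solves V (cval T) f \<longleftrightarrow>
    \<not> (\<exists>u\<in>internal_nodes T. \<exists>S. S \<subseteq> V \<and> f S = Hang \<and> falls S (cval u))"
proof -
  have "(falls S (cval T) \<longleftrightarrow> f S = Fall) \<longleftrightarrow>
      \<not> (\<exists>u\<in>internal_nodes T. f S = Hang \<and> falls S (cval u))" if "S \<subseteq> V" for S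
    using falls_cval_iff [of S T] leaves [OF that] by (cases "f S") auto
  then show ?thesis
    unfolding solves_def by blast
qed

lemma solves_cval_if_children_separate:
  assumes leaves: "\<And>S. S \<subseteq> V \<Longrightarrow> f S = Fall \<longleftrightarrow> (\<exists>w\<in>set (leaves T). falls S w)"
    and separate: "\<forall>S. S \<subseteq> V \<and> f S = Hang \<longrightarrow>
      (\<forall>l r. Node l r \<in> internal_nodes T \<longrightarrow>
        (\<forall>\<phi>1 \<phi>2. solves V (cval l) \<phi>1 \<and> solves V (cval r) \<phi>2 \<longrightarrow>
          (\<exists>S'. S \<subseteq> S' \<and> S' \<subseteq> V \<and> \<phi>1 S' \<noteq> \<phi>2 S')))"
  shows "solves V (cval T) f"
proof (rule ccontr)
  assume "\<not> solves V (cval T) f"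
  then obtain u S where u: "u \<in> internal_nodes T" "falls S (cval u)"
    and S: "S \<subseteq> V" "f S = Hang"
    using solves_cval_iff_no_falling_node [OF leaves] by blast
  then have "falls S (cval T)"
    using falls_cval_iff by blast
  moreover have "\<forall>w\<in>set (leaves T). \<not> falls S w"
    using leaves [OF S(1)] S(2) by simp
  ultimately obtain l r where lr: "Node l r \<in> internal_nodes T" "falls S (cval (Node l r))"
      "\<not> falls S (cval l)" "\<not> falls S (cval r)"
    using minimal_falling_node [of S T] by blast
  let ?\<phi> = "\<lambda>t S'. if falls S' (cval t) then Fall else Hang"
  have "solves V (cval l) (?\<phi> l) \<and> solves V (cval r) (?\<phi> r)"
    by (simp add: solves_def)
  from separate [rule_format, OF conjI [OF S] lr(1) this]
  obtain S' where "S \<subseteq> S'" "?\<phi> l S' \<noteq> ?\<phi> r S'"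
    by blast
  then show False
    using children_fall_together [OF lr(2-4)] by auto
qed

theorem theorem1:
  fixes V :: "'a set" and T :: "'a word ctree" and g :: "nat \<Rightarrow> 'a set \<Rightarrow> outcome"
  assumes "finite V"
    and "\<forall>w\<in>set (leaves T). word_over V w"
    and "\<forall>i<length (leaves T). is_spec V (g i) \<and> solves V (leaves T ! i) (g i)"
  defines "f \<equiv> spec_join (length (leaves T)) g"
  shows "(solves V (cval T) f \<longleftrightarrow>
           \<not> (\<exists>u\<in>internal_nodes T. \<exists>S. S \<subseteq> V \<and> f S = Hang \<and> is_zero (kill S (cval u))))
       \<and> ((\<forall>S. S \<subseteq> V \<and> f S = Hang \<longrightarrow>
             (\<forall>l r. Node l r \<in> internal_nodes T \<longrightarrow>
               (\<forall>\<phi>1 \<phi>2. solves V (cval l) \<phi>1 \<and> solves V (cval r) \<phi>2 \<longrightarrow>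
                  (\<exists>S'. S \<subseteq> S' \<and> S' \<subseteq> V \<and> \<phi>1 S' \<noteq> \<phi>2 S'))))
          \<longrightarrow> solves V (cval T) f)"
proof -
  have "\<forall>i<length (leaves T). solves V (leaves T ! i) (g i)"
    using assms(3) by blast
  then have leaves: "f S = Fall \<longleftrightarrow> (\<exists>w\<in>set (leaves T). falls S w)" if "S \<subseteq> V" for S
    unfolding f_def using that by (rule spec_join_eq_Fall_iff_falls)
  show ?thesis
    by (rule conjI [OF solves_cval_iff_no_falling_node [OF leaves]
          impI [OF solves_cval_if_children_separate [OF leaves]]])
qed

end
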